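(* Let $n\ge2$ and let $H$ be a subgraph of the complete graph $K_n$ on vertex set $\{1,\dots,n\}$. Let $H^*$ be the subgraph of the shift graph $S_n$ induced by the vertices $(a,b)$, $a<b$, such that $\{a,b\}$ is an edge of $H$. Then (1) $\chi(H^* )\ge\log_2\chi(H)$, and (2) the odd-girth of $H^*$ is strictly larger than the odd-girth of $H$.
   Context: The shift graph $S_n$ has vertex set $\{(a,b):1\le a<b\le n\}$, two vertices $(a,b)$ and $(a',b')$ adjacent if and only if $b=a'$ or $b'=a$. The odd-girth of a graph is the length of its shortest odd cycle (infinite if bipartite); the convention is that infinity is strictly larger than infinity is not needed, i.e., if $H$ is bipartite then $H^*$ is bipartite. *)

theory Defs
  imports Complex_Main "HOL-Library.Extended_Nat"
begin

text \<open>A graph is given by a vertex set V and a symmetric adjacency relation adj.\<close>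

definition proper_colouring :: "'a set \<Rightarrow> ('a \<Rightarrow> 'a \<Rightarrow> bool) \<Rightarrow> nat \<Rightarrow> ('a \<Rightarrow> nat) \<Rightarrow> bool" where
  "proper_colouring V adj k c \<longleftrightarrow>
     (\<forall>v\<in>V. c v < k) \<and> (\<forall>u\<in>V. \<forall>v\<in>V. adj u v \<longrightarrow> c u \<noteq> c v)"

definition chromatic_number :: "'a set \<Rightarrow> ('a \<Rightarrow> 'a \<Rightarrow> bool) \<Rightarrow> nat" where
  "chromatic_number V adj = (LEAST k. \<exists>c. proper_colouring V adj k c)"

definition is_cycle :: "'a set \<Rightarrow> ('a \<Rightarrow> 'a \<Rightarrow> bool) \<Rightarrow> 'a list \<Rightarrow> bool" where
  "is_cycle V adj vs \<longleftrightarrow> length vs \<ge> 3 \<and> distinct vs \<and> set vs \<subseteq> V \<and>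
     (\<forall>i < length vs. adj (vs ! i) (vs ! ((i + 1) mod length vs)))"

text \<open>Odd girth: length of a shortest odd cycle; infinity (Inf of the empty set) if none.\<close>
definition odd_girth :: "'a set \<Rightarrow> ('a \<Rightarrow> 'a \<Rightarrow> bool) \<Rightarrow> enat" where
  "odd_girth V adj = Inf {enat (length vs) | vs. is_cycle V adj vs \<and> odd (length vs)}"

text \<open>Subgraph H of K_n on {1..n}, given by its edge set E.\<close>
definition H_adj :: "nat set set \<Rightarrow> nat \<Rightarrow> nat \<Rightarrow> bool" where
  "H_adj E u v \<longleftrightarrow> {u, v} \<in> E \<and> u \<noteq> v"

definition shift_adj :: "nat \<times> nat \<Rightarrow> nat \<times> nat \<Rightarrow> bool" where
  "shift_adj x y \<longleftrightarrow> snd x = fst y \<or> snd y = fst x"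

definition Hstar_verts :: "nat set set \<Rightarrow> (nat \<times> nat) set" where
  "Hstar_verts E = {(a, b). a < b \<and> {a, b} \<in> E}"

end

(*
  (1) Colour each vertex v of H by the set of colours that a proper k-colouring c of H* gives to
  the pairs (v, w).  If u < v are adjacent in H, the colour c (u, v) does not occur at v, since
  (u, v) and (v, w) are adjacent in the shift graph; hence H is properly coloured by at most 2^k
  colours.

  (2) Consecutive vertices X i, X (i + 1) of a closed walk in H* share one endpoint p i.  Both
  p i and p (i + 1) are endpoints of X (i + 1), so they are equal or adjacent in H, and they are
  different exactly when the walk keeps its direction at X (i + 1), i.e. does not switch between
  forward steps (a, b) -> (b, c) and backward steps (b, c) -> (a, b).  Around a closed walk of
  odd length L the number of switches is even, and it is positive because the first coordinate
  cannot rise (or fall) all the way round.  So the p i form a closed walk in H whose number of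
  proper moves is odd and less than L, and such a walk contains an odd cycle of at most that
  length.
*)
theory Submission
  imports Defs
begin

lemma chromatic_number_le:
  "proper_colouring V adj k c \<Longrightarrow> chromatic_number V adj \<le> k"
  unfolding chromatic_number_def by (auto intro: Least_le)

lemma proper_colouring_chromatic_number:
  "proper_colouring V adj k c \<Longrightarrow> \<exists>c. proper_colouring V adj (chromatic_number V adj) c"
  unfolding chromatic_number_def by (rule LeastI_ex) blast

lemma proper_colouring_Hstar_fst:
  assumes "E \<subseteq> {{a, b} | a b. 1 \<le> a \<and> a < b \<and> b \<le> n}"
  shows "proper_colouring (Hstar_verts E) shift_adj (Suc n) fst"
proof -
  have "fst v < Suc n" if "v \<in> Hstar_verts E" for v
  proof -
    have "{fst v, snd v} \<in> E" using that by (auto simp: Hstar_verts_def)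
    then obtain a b where "{fst v, snd v} = {a, b}" "a < b" "b \<le> n"
      using assms by blast
    then show ?thesis by (auto simp: doubleton_eq_iff)
  qed
  moreover have "fst u \<noteq> fst v"
    if "u \<in> Hstar_verts E" "v \<in> Hstar_verts E" "shift_adj u v" for u v
    using that by (auto simp: Hstar_verts_def shift_adj_def)
  ultimately show ?thesis by (simp add: proper_colouring_def)
qed

lemma H_colouring_of_Hstar_colouring:
  assumes c: "proper_colouring (Hstar_verts E) shift_adj k c"
  shows "\<exists>c'. proper_colouring V (H_adj E) (2 ^ k) c'"
proof -
  define out_colours where "out_colours v = {c (v, w) | w. (v, w) \<in> Hstar_verts E}" for v
  have out_colours_range: "out_colours v \<in> Pow {..<k}" for v
    using c unfolding out_colours_def proper_colouring_def by auto
  obtain f where f: "bij_betw f (Pow {..<k}) {..<2 ^ k :: nat}"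
    using ex_bij_betw_finite_nat[of "Pow {..<k}"] by (auto simp: card_Pow atLeast0LessThan)
  have "out_colours u \<noteq> out_colours v" if "u < v" "{u, v} \<in> E" for u v
  proof
    assume same: "out_colours u = out_colours v"
    have uv: "(u, v) \<in> Hstar_verts E" using that unfolding Hstar_verts_def by auto
    then have "c (u, v) \<in> out_colours v" using same unfolding out_colours_def by auto
    then obtain w where "(v, w) \<in> Hstar_verts E" "c (v, w) = c (u, v)"
      unfolding out_colours_def by auto
    moreover have "shift_adj (u, v) (v, w)" unfolding shift_adj_def by simp
    ultimately show False using c uv unfolding proper_colouring_def by metis
  qed
  then have "f (out_colours u) \<noteq> f (out_colours v)" if "H_adj E u v" for u v
    using that inj_onD[OF bij_betw_imp_inj_on[OF f] _ out_colours_range out_colours_range]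
    unfolding H_adj_def by (metis insert_commute linorder_neqE_nat)
  moreover have "f (out_colours v) < 2 ^ k" for v
    using bij_betwE[OF f] out_colours_range by blast
  ultimately have "proper_colouring V (H_adj E) (2 ^ k) (\<lambda>v. f (out_colours v))"
    unfolding proper_colouring_def by blast
  then show ?thesis by blast
qed

lemma chromatic_number_H_le_two_power:
  assumes "E \<subseteq> {{a, b} | a b. 1 \<le> a \<and> a < b \<and> b \<le> n}"
  shows "chromatic_number {1..n} (H_adj E) \<le> 2 ^ chromatic_number (Hstar_verts E) shift_adj"
proof -
  obtain c where "proper_colouring (Hstar_verts E) shift_adj (chromatic_number (Hstar_verts E) shift_adj) c"
    using proper_colouring_chromatic_number[OF proper_colouring_Hstar_fst[OF assms]] by blast
  then obtain c' where
    "proper_colouring {1..n} (H_adj E) (2 ^ chromatic_number (Hstar_verts E) shift_adj) c'"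
    using H_colouring_of_Hstar_colouring by blast
  then show ?thesis by (rule chromatic_number_le)
qed

text \<open>The first vertex is repeated at the end, so the walk has \<open>length ws - 1\<close> edges.\<close>
definition closed_walk :: "('a \<Rightarrow> 'a \<Rightarrow> bool) \<Rightarrow> 'a list \<Rightarrow> bool" where
  "closed_walk adj ws \<longleftrightarrow> ws \<noteq> [] \<and> hd ws = last ws \<and> successively adj ws"

lemma is_cycle_butlast_closed_walk:
  assumes irrefl: "\<And>u. \<not> adj u u" and dom: "\<And>u v. adj u v \<Longrightarrow> u \<in> V"
    and walk: "closed_walk adj ws" and dist: "distinct (butlast ws)" and odd: "odd (length ws - 1)"
  shows "is_cycle V adj (butlast ws)"
proof -
  define vs where "vs = butlast ws"
  have len: "length vs = length ws - 1" unfolding vs_def by simp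
  then have vs: "vs \<noteq> []" using odd by (metis odd_pos length_greater_0_conv)
  have "ws = vs @ [last ws]" using walk unfolding vs_def closed_walk_def by simp
  moreover have "last ws = vs ! 0"
    using walk vs unfolding closed_walk_def vs_def
    by (metis hd_append2 hd_conv_nth append_butlast_last_id)
  ultimately have ws: "ws = vs @ [vs ! 0]" by simp
  have step: "adj (vs ! i) (vs ! ((i + 1) mod length vs))" if "i < length vs" for i
  proof -
    have "adj (ws ! i) (ws ! Suc i)"
      using walk that ws unfolding closed_walk_def successively_conv_nth
      by (metis length_append_singleton not_less_eq)
    then show ?thesis using that ws
      by (cases "Suc i = length vs") (auto simp: nth_append)
  qed
  have "length vs \<noteq> 1" using step[of 0] irrefl vs by auto
  then have "length vs \<ge> 3" using odd len by presburger
  moreover have "set vs \<subseteq> V" using step dom by (metis in_set_conv_nth subsetI)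
  ultimately show ?thesis using dist step unfolding is_cycle_def vs_def by blast
qed

lemma successively_split_at_repeat:
  assumes "successively P (xs @ v # ys @ v # zs)"
  shows "successively P (v # ys @ [v])" "successively P (xs @ v # zs)"
proof -
  have "successively P ((xs @ [v]) @ (ys @ [v]) @ zs)" using assms by simp
  then show "successively P (v # ys @ [v])" "successively P (xs @ v # zs)"
    by (auto simp: successively_append_iff successively_Cons hd_append)
qed

lemma closed_walk_split:
  assumes walk: "closed_walk adj ws" and "\<not> distinct (butlast ws)"
  obtains w1 w2 where "closed_walk adj w1" "closed_walk adj w2"
    "length w1 \<ge> 2" "length w2 \<ge> 2" "length w1 + length w2 = Suc (length ws)"
proof -
  obtain a v b c where "butlast ws = a @ [v] @ b @ [v] @ c"
    using assms(2) not_distinct_decomp by blast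
  then have ws: "ws = a @ v # b @ v # c @ [last ws]"
    using walk unfolding closed_walk_def
    by (metis append_butlast_last_id append_Cons append_assoc self_append_conv2)
  have "hd (a @ v # c @ [last ws]) = hd ws" by (subst ws) (cases a, auto)
  then have "closed_walk adj (v # b @ [v])" "closed_walk adj (a @ v # c @ [last ws])"
    using walk successively_split_at_repeat[of adj a v b "c @ [last ws]"] ws
    unfolding closed_walk_def by auto
  moreover have "length (v # b @ [v]) + length (a @ v # c @ [last ws]) = Suc (length ws)"
    using arg_cong[OF ws, of length] by simp
  ultimately show ?thesis using that by fastforce
qed

lemma odd_cycle_of_odd_closed_walk:
  assumes irrefl: "\<And>u. \<not> adj u u" and dom: "\<And>u v. adj u v \<Longrightarrow> u \<in> V"
  shows "closed_walk adj ws \<Longrightarrow> odd (length ws - 1)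
    \<Longrightarrow> \<exists>vs. is_cycle V adj vs \<and> odd (length vs) \<and> length vs < length ws"
proof (induction "length ws" arbitrary: ws rule: less_induct)
  case less
  show ?case
  proof (cases "distinct (butlast ws)")
    case True
    have "length (butlast ws) < length ws" using less.prems(1) by (simp add: closed_walk_def)
    then show ?thesis
      using is_cycle_butlast_closed_walk[OF irrefl dom less.prems(1) True less.prems(2)] less.prems(2)
      by (intro exI[of _ "butlast ws"]) simp
  next
    case False
    then obtain w1 w2 where w: "closed_walk adj w1" "closed_walk adj w2"
      "length w1 \<ge> 2" "length w2 \<ge> 2" "length w1 + length w2 = Suc (length ws)"
      using closed_walk_split less.prems(1) by blast
    have "odd (length w1 - 1) \<or> odd (length w2 - 1)" using w(3-5) less.prems(2) by presburger
    moreover have "length w1 < length ws" "length w2 < length ws" using w(3-5) by linarith+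
    ultimately obtain w where "closed_walk adj w" "odd (length w - 1)" "length w < length ws"
      using w(1,2) by blast
    moreover from this obtain vs where "is_cycle V adj vs" "odd (length vs)" "length vs < length w"
      using less.hyps by blast
    ultimately show ?thesis by (intro exI[of _ vs]) simp
  qed
qed

lemma odd_girth_less_if_shorter_odd_cycles:
  assumes "\<And>xs. is_cycle V' adj' xs \<Longrightarrow> odd (length xs) \<Longrightarrow>
    \<exists>vs. is_cycle V adj vs \<and> odd (length vs) \<and> length vs < length xs"
  shows "odd_girth V adj < odd_girth V' adj' \<or> odd_girth V' adj' = \<infinity>"
proof (cases "\<exists>xs. is_cycle V' adj' xs \<and> odd (length xs)")
  case True
  let ?lengths = "{enat (length xs) | xs. is_cycle V' adj' xs \<and> odd (length xs)}"
  obtain ys where "is_cycle V' adj' ys" "odd (length ys)" using True by blast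
  then have "enat (length ys) \<in> ?lengths" by blast
  then have "Inf ?lengths \<in> ?lengths" by (rule wellorder_InfI)
  then obtain xs where "Inf ?lengths = enat (length xs)" "is_cycle V' adj' xs" "odd (length xs)"
    by blast
  then have xs: "is_cycle V' adj' xs" "odd (length xs)" "odd_girth V' adj' = length xs"
    unfolding odd_girth_def by simp_all
  then obtain vs where "is_cycle V adj vs" "odd (length vs)" "length vs < length xs"
    using assms by blast
  then have "odd_girth V adj \<le> enat (length vs)" unfolding odd_girth_def by (blast intro: Inf_lower)
  also have "\<dots> < odd_girth V' adj'" using xs(3) \<open>length vs < length xs\<close> by simp
  finally show ?thesis ..
next
  case False
  then have "{enat (length xs) | xs. is_cycle V' adj' xs \<and> odd (length xs)} = {}" by auto
  then have "odd_girth V' adj' = \<infinity>" unfolding odd_girth_def by (metis Inf_empty top_enat_def)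
  then show ?thesis ..
qed

lemma successively_remdups_adj_reflclp:
  "successively (\<lambda>u v. u = v \<or> adj u v) ws \<Longrightarrow> successively adj (remdups_adj ws)"
proof (induction ws rule: remdups_adj.induct)
  case (3 x y xs)
  show ?case
  proof (cases "x = y")
    case True
    then show ?thesis using 3 by (simp add: successively_Cons)
  next
    case False
    then have "adj x y" "successively adj (remdups_adj (y # xs))"
      using 3 by (simp_all add: successively_Cons)
    then show ?thesis using False by (simp add: successively_Cons)
  qed
qed simp_all

lemma length_remdups_adj_map_upt:
  "length (remdups_adj (map p [0..<Suc k])) = Suc (\<Sum>i<k. of_bool (p i \<noteq> p (Suc i)))"
proof (induction k)
  case (Suc k)
  have "remdups_adj (map p [0..<Suc (Suc k)]) = remdups_adj (map p [0..<k] @ [p k, p (Suc k)])"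
    by simp
  also have "\<dots> = remdups_adj (map p [0..<Suc k]) @ (if p k = p (Suc k) then [] else [p (Suc k)])"
    by (simp add: remdups_adj_append_two)
  finally show ?case using Suc by (simp del: upt_Suc)
qed simp

lemma even_sum_changes_iff:
  fixes d :: "nat \<Rightarrow> bool"
  shows "even (\<Sum>i<k. of_bool (d i \<noteq> d (Suc i)) :: nat) \<longleftrightarrow> d 0 = d k"
  by (induction k) auto

lemma sum_of_bool_complement:
  "(\<Sum>i<k. of_bool (P i)) + (\<Sum>i<k. of_bool (\<not> P i)) = (k :: nat)"
  by (induction k) auto

locale shift_walk =
  fixes X :: "nat \<Rightarrow> nat \<times> nat"
  assumes ordered: "fst (X i) < snd (X i)"
    and adjacent: "shift_adj (X i) (X (Suc i))"
begin

definition forward :: "nat \<Rightarrow> bool" where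
  "forward i \<longleftrightarrow> snd (X i) = fst (X (Suc i))"

definition shared_vertex :: "nat \<Rightarrow> nat" where
  "shared_vertex i = (if forward i then fst (X (Suc i)) else snd (X (Suc i)))"

lemma backward_step: "\<not> forward i \<Longrightarrow> snd (X (Suc i)) = fst (X i)"
  using adjacent[of i] by (auto simp: forward_def shift_adj_def)

lemma forward_iff_fst_less: "forward i \<longleftrightarrow> fst (X i) < fst (X (Suc i))"
proof (cases "forward i")
  case True
  then show ?thesis using ordered[of i] by (simp add: forward_def)
next
  case False
  then show ?thesis using ordered[of "Suc i"] backward_step[of i] by simp
qed

lemma shared_vertex_Suc:
  "shared_vertex (Suc i) = (if forward (Suc i) then snd (X (Suc i)) else fst (X (Suc i)))"
  using backward_step[of "Suc i"] unfolding shared_vertex_def[of "Suc i"] forward_def[of "Suc i"]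
  by simp

lemma shared_vertex_change_iff:
  "shared_vertex i \<noteq> shared_vertex (Suc i) \<longleftrightarrow> forward i = forward (Suc i)"
  using ordered[of "Suc i"] unfolding shared_vertex_Suc shared_vertex_def[of i] by auto

lemma shared_vertex_step:
  assumes "X (Suc i) \<in> Hstar_verts E"
  shows "shared_vertex i = shared_vertex (Suc i) \<or> H_adj E (shared_vertex i) (shared_vertex (Suc i))"
proof -
  have "{fst (X (Suc i)), snd (X (Suc i))} \<in> E" using assms by (auto simp: Hstar_verts_def)
  then show ?thesis
    unfolding shared_vertex_Suc shared_vertex_def[of i] H_adj_def by (auto simp: insert_commute)
qed

lemma constant_direction_not_closed:
  assumes same_next: "\<And>i. i < k \<Longrightarrow> forward (Suc i) = forward i" and "0 < k"
  shows "X k \<noteq> X 0"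
proof -
  have same: "forward i = forward 0" if "i < k" for i
    using that
  proof (induction i)
    case (Suc i)
    then have "forward (Suc i) = forward i" "forward i = forward 0"
      using same_next[of i] by simp_all
    then show ?case by (rule trans)
  qed (simp add: log_def)
  show ?thesis
  proof (cases "forward 0")
    case True
    have "fst (X i) < fst (X (Suc i))" if "i \<in> {..<k}" for i
      using same[of i] that True forward_iff_fst_less[of i] by simp
    then have "fst (X 0) < fst (X k)"
      by (rule lift_Suc_mono_less_ivl[where N = "{..<k}" and f = "\<lambda>i. fst (X i)"])
        (use \<open>0 < k\<close> in auto)
    then show ?thesis by auto
  next
    case False
    have "- int (fst (X i)) < - int (fst (X (Suc i)))" if "i \<in> {..<k}" for i
      using same[of i] that False ordered[of "Suc i"] backward_step[of i] by simp
    then have "- int (fst (X 0)) < - int (fst (X k))"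
      by (rule lift_Suc_mono_less_ivl[where N = "{..<k}" and f = "\<lambda>i. - int (fst (X i))"])
        (use \<open>0 < k\<close> in auto)
    then show ?thesis by auto
  qed
qed

lemma odd_shared_vertex_moves:
  assumes period: "\<And>i. X (i + L) = X i" and "odd L"
  defines "moves \<equiv> \<Sum>i<L. of_bool (shared_vertex i \<noteq> shared_vertex (Suc i))"
  shows "odd moves" and "moves < L"
proof -
  define turns where "turns = (\<Sum>i<L. of_bool (forward i \<noteq> forward (Suc i)) :: nat)"
  have sum: "moves + turns = L"
    unfolding moves_def turns_def shared_vertex_change_iff
    using sum_of_bool_complement[where k = L and P = "\<lambda>i. forward i = forward (Suc i)"] by simp
  have "forward L = forward 0" using period[of 0] period[of 1] by (simp add: forward_def)
  then have even: "even turns" unfolding turns_def even_sum_changes_iff by simp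
  have nonzero: "turns \<noteq> 0"
  proof
    assume "turns = 0"
    then have "forward (Suc i) = forward i" if "i < L" for i
      using that by (auto simp: turns_def)
    then show False using constant_direction_not_closed[of L] period[of 0] \<open>odd L\<close> odd_pos by auto
  qed
  show "odd moves" using sum even \<open>odd L\<close> by auto
  show "moves < L" using sum nonzero by linarith
qed

end

lemma H_adj_in_vertices:
  assumes "E \<subseteq> {{a, b} | a b. 1 \<le> a \<and> a < b \<and> b \<le> n}" and "H_adj E u v"
  shows "u \<in> {1..n}"
proof -
  obtain a b where "{u, v} = {a, b}" "1 \<le> a" "a < b" "b \<le> n"
    using assms unfolding H_adj_def by blast
  then show ?thesis by (auto simp: doubleton_eq_iff)
qed

lemma odd_cycle_of_shift_odd_cycle:
  assumes E: "E \<subseteq> {{a, b} | a b. 1 \<le> a \<and> a < b \<and> b \<le> n}"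
    and cycle: "is_cycle (Hstar_verts E) shift_adj xs" and odd: "odd (length xs)"
  shows "\<exists>vs. is_cycle {1..n} (H_adj E) vs \<and> odd (length vs) \<and> length vs < length xs"
proof -
  define L where "L = length xs"
  define X where "X i = xs ! (i mod L)" for i
  have "L \<ge> 3" using cycle unfolding is_cycle_def L_def by simp
  then have index: "i mod L < L" for i by simp
  have vertex: "X i \<in> Hstar_verts E" for i
    using cycle index[of i] nth_mem[of "i mod L" xs] unfolding is_cycle_def X_def L_def by blast
  have "shift_adj (xs ! (i mod L)) (xs ! ((i mod L + 1) mod L))" for i
    using cycle index[of i] unfolding is_cycle_def L_def by blast
  then have adjacent: "shift_adj (X i) (X (Suc i))" for i
    unfolding X_def by (simp add: mod_Suc_eq)
  have period: "X (i + L) = X i" for i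
    unfolding X_def by simp
  interpret walk: shift_walk X
  proof
    show "fst (X i) < snd (X i)" for i using vertex[of i] by (auto simp: Hstar_verts_def)
  qed (rule adjacent)
  define ws where "ws = remdups_adj (map walk.shared_vertex [0..<Suc L])"
  have "walk.shared_vertex L = walk.shared_vertex 0"
    using period[of 0] period[of 1] by (simp add: walk.shared_vertex_def walk.forward_def)
  moreover have "successively (\<lambda>u v. u = v \<or> H_adj E u v) (map walk.shared_vertex [0..<Suc L])"
    using walk.shared_vertex_step[OF vertex] by (simp add: successively_conv_nth del: upt_Suc)
  ultimately have "closed_walk (H_adj E) ws"
    unfolding ws_def closed_walk_def
    by (simp add: successively_remdups_adj_reflclp hd_map last_map del: upt_Suc)
  moreover have "odd (length ws - 1)" and "length ws - 1 < L"
    using walk.odd_shared_vertex_moves[OF period] odd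
    by (simp_all add: ws_def length_remdups_adj_map_upt L_def del: upt_Suc)
  ultimately obtain vs where "is_cycle {1..n} (H_adj E) vs" "odd (length vs)" "length vs < length ws"
    using odd_cycle_of_odd_closed_walk[of "H_adj E" "{1..n}" ws] H_adj_in_vertices[OF E]
    by (auto simp: H_adj_def)
  then show ?thesis using \<open>length ws - 1 < L\<close> unfolding L_def by (intro exI[of _ vs]) simp
qed

theorem mainTheorem13:
  fixes n :: nat and E :: "nat set set"
  assumes "n \<ge> 2"
    and "E \<subseteq> {{a, b} | a b. 1 \<le> a \<and> a < b \<and> b \<le> n}"
  shows "real (chromatic_number (Hstar_verts E) shift_adj)
           \<ge> log 2 (real (chromatic_number {1..n} (H_adj E)))
         \<and> (odd_girth {1..n} (H_adj E) = \<infinity> \<longrightarrow> odd_girth (Hstar_verts E) shift_adj = \<infinity>)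
         \<and> (odd_girth {1..n} (H_adj E) \<noteq> \<infinity> \<longrightarrow>
              odd_girth {1..n} (H_adj E) < odd_girth (Hstar_verts E) shift_adj)"
proof -
  have "log 2 (real (chromatic_number {1..n} (H_adj E)))
      \<le> real (chromatic_number (Hstar_verts E) shift_adj)"
  proof (cases "chromatic_number {1..n} (H_adj E) = 0")
    case False
    then show ?thesis using log2_of_power_le[OF chromatic_number_H_le_two_power[OF assms(2)]] by simp
  qed (simp add: log_def)
  moreover have "odd_girth {1..n} (H_adj E) < odd_girth (Hstar_verts E) shift_adj
      \<or> odd_girth (Hstar_verts E) shift_adj = \<infinity>"
    by (rule odd_girth_less_if_shorter_odd_cycles) (rule odd_cycle_of_shift_odd_cycle[OF assms(2)])
  ultimately show ?thesis by auto
qed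

end
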